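(* Let $k\ge 0$ be an integer and let $L_k$ be the $k\times(k+1)$ pencil with $\lambda$ in positions $(i,i)$ and $1$ in positions $(i,i+1)$, $i=1,\dots,k$, and zeros elsewhere. Then for each $j=0,1,\dots,k+1$ there exist vector polynomials $u_1(\lambda),\dots,u_{k+1}(\lambda)\in\mathbb{C}[\lambda]^k$ and $v_1(\lambda),\dots,v_{k+1}(\lambda)\in\mathbb{C}[\lambda]^{k+1}$, all of degree at most $1$, such that $$L_k=u_1(\lambda)v_1(\lambda)^T+\cdots+u_{k+1}(\lambda)v_{k+1}(\lambda)^T$$ and $\deg u_1=\cdots=\deg u_j=\deg v_{j+1}=\cdots=\deg v_{k+1}=0$.
   Context: The degree of a vector polynomial is the maximum degree of its entries (a zero vector is regarded as having degree $0$). *)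

theory Defs
  imports "HOL-Computational_Algebra.Polynomial"
begin

text \<open>Vector polynomials in C[lambda]^n are represented as functions
  nat => complex poly, of which only the entries with index < n matter
  (0-based indexing).\<close>

definition vdeg :: "nat \<Rightarrow> (nat \<Rightarrow> complex poly) \<Rightarrow> nat" where
  "vdeg n w = Max (insert 0 ((\<lambda>r. degree (w r)) ` {..<n}))"

definition Lpencil :: "nat \<Rightarrow> nat \<Rightarrow> nat \<Rightarrow> complex poly" where
  "Lpencil k r c = (if c = r then [:0, 1:] else if c = r + 1 then 1 else 0)"

end

theory Submission
  imports Defs
begin

text \<open>Every matrix whose block below row \<open>j\<close> and left of column \<open>j\<close> vanishes is the sum
  of its first \<open>j\<close> rows, each written as \<open>e\<^sub>i A\<^sub>i\<^sup>T\<close> with a constant left factor, and of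
  its remaining columns truncated to rows \<open>\<ge> j\<close>, each written as \<open>a\<^sub>i e\<^sub>i\<^sup>T\<close> with a constant
  right factor. For the pencil \<open>L\<^sub>k\<close>, which is upper triangular with entries of degree
  at most 1, this gives the required \<open>k + 1\<close> rank-one terms for every \<open>j\<close>.\<close>

definition unit_vec :: "nat \<Rightarrow> nat \<Rightarrow> 'a::zero_neq_one" where
  "unit_vec i r = (if r = i then 1 else 0)"

lemma row_column_split:
  fixes A :: "nat \<Rightarrow> nat \<Rightarrow> 'a::comm_semiring_1"
  assumes "\<And>r c. c < j \<Longrightarrow> j \<le> r \<Longrightarrow> A r c = 0"
    and "j \<le> n" and "c < n"
  shows "A r c = (\<Sum>i<n. if i < j then unit_vec i r * A i c
                          else (if j \<le> r then A r i else 0) * unit_vec i c)"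
proof (cases "r < j")
  case True
  then have "(\<Sum>i<n. if i < j then unit_vec i r * A i c
                      else (if j \<le> r then A r i else 0) * unit_vec i c)
             = (\<Sum>i<n. if i = r then A r c else 0)"
    by (intro sum.cong) (auto simp: unit_vec_def)
  with True assms(2) show ?thesis by simp
next
  case False
  then have "(\<Sum>i<n. if i < j then unit_vec i r * A i c
                      else (if j \<le> r then A r i else 0) * unit_vec i c)
             = (\<Sum>i<n. if i = c then (if j \<le> c then A r c else 0) else 0)"
    by (intro sum.cong) (auto simp: unit_vec_def)
  with False assms show ?thesis by (cases "j \<le> c") simp_all
qed

lemma vdeg_leI: "(\<And>r. r < n \<Longrightarrow> degree (w r) \<le> d) \<Longrightarrow> vdeg n w \<le> d"
  unfolding vdeg_def by (subst Max_le_iff) auto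

lemma vdeg_unit_vec: "vdeg n (unit_vec i) = 0"
  using vdeg_leI[of n "unit_vec i" 0] by (simp add: unit_vec_def)

lemma degree_Lpencil_le: "degree (Lpencil k r c) \<le> 1"
  unfolding Lpencil_def by (auto simp: degree_pCons_eq_if)

lemma Lpencil_below_diagonal: "c < r \<Longrightarrow> Lpencil k r c = 0"
  unfolding Lpencil_def by auto

theorem lemma3p7:
  fixes k j :: nat
  assumes "j \<le> k + 1"
  shows "\<exists>u v :: nat \<Rightarrow> nat \<Rightarrow> complex poly.
           (\<forall>r<k. \<forall>c<k + 1. Lpencil k r c = (\<Sum>i = 1..k + 1. u i r * v i c)) \<and>
           (\<forall>i\<in>{1..k + 1}. vdeg k (u i) \<le> 1 \<and> vdeg (k + 1) (v i) \<le> 1) \<and>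
           (\<forall>i\<in>{1..j}. vdeg k (u i) = 0) \<and>
           (\<forall>i\<in>{j + 1..k + 1}. vdeg (k + 1) (v i) = 0)"
proof -
  define u :: "nat \<Rightarrow> nat \<Rightarrow> complex poly" where
    "u i = (if i \<le> j then unit_vec (i - 1) else (\<lambda>r. if j \<le> r then Lpencil k r (i - 1) else 0))"
    for i
  define v :: "nat \<Rightarrow> nat \<Rightarrow> complex poly" where
    "v i = (if i \<le> j then Lpencil k (i - 1) else unit_vec (i - 1))" for i
  have "Lpencil k r c = (\<Sum>i = 1..k + 1. u i r * v i c)" if "c < k + 1" for r c
  proof -
    have "Lpencil k r c = (\<Sum>i<k + 1. if i < j then unit_vec i r * Lpencil k i c
                            else (if j \<le> r then Lpencil k r i else 0) * unit_vec i c)"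
      using assms that by (intro row_column_split) (simp_all add: Lpencil_below_diagonal)
    also have "\<dots> = (\<Sum>i<k + 1. u (Suc i) r * v (Suc i) c)"
      by (intro sum.cong) (simp_all add: u_def v_def)
    also have "\<dots> = (\<Sum>i = 0..k. u (Suc i) r * v (Suc i) c)"
      by (simp add: atLeast0AtMost lessThan_Suc_atMost)
    also have "\<dots> = (\<Sum>i = 1..k + 1. u i r * v i c)"
      using sum.shift_bounds_cl_Suc_ivl [of "\<lambda>i. u i r * v i c" 0 k] by simp
    finally show ?thesis .
  qed
  moreover have "vdeg k (u i) \<le> 1 \<and> vdeg (k + 1) (v i) \<le> 1" for i
    by (intro conjI vdeg_leI) (auto simp: u_def v_def unit_vec_def degree_Lpencil_le [unfolded One_nat_def])
  moreover have "vdeg k (u i) = 0" if "i \<le> j" for i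
    using that by (simp add: u_def vdeg_unit_vec)
  moreover have "vdeg (k + 1) (v i) = 0" if "j < i" for i
    using that by (simp add: v_def vdeg_unit_vec)
  ultimately show ?thesis
    by (intro exI[of _ u] exI[of _ v]) auto
qed

end
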